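(* Let $\mathbf{Q}=(q_{ij})_{i,j=1}^l$ be a complex matrix with $q_{ij}q_{ji}=1$. Let $V$ be any nonlocal vertex algebra and let $\psi$ be any map from $\{u^{(i)},v^{(i)}\mid i=1,\dots,l\}$ to $V$ such that for $1\le i,j\le l$ $$Y(\psi(u^{(i)}),x_1)Y(\psi(u^{(j)}),x_2)=q_{ij}Y(\psi(u^{(j)}),x_2)Y(\psi(u^{(i)}),x_1),$$ $$Y(\psi(v^{(i)}),x_1)Y(\psi(v^{(j)}),x_2)=q_{ij}Y(\psi(v^{(j)}),x_2)Y(\psi(v^{(i)}),x_1),$$ $$Y(\psi(u^{(i)}),x_1)Y(\psi(v^{(j)}),x_2)-q_{ji}Y(\psi(v^{(j)}),x_2)Y(\psi(u^{(i)}),x_1)=\delta_{ij}x_2^{-1}\delta\left(\frac{x_1}{x_2}\right).$$ Then there exists a unique nonlocal vertex algebra homomorphism from $V_{\mathbf{Q}}$ to $V$ extending $\psi$.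
   Context: $x_2^{-1}\delta(x_1/x_2)=\sum_{n\in\mathbb{Z}}x_1^nx_2^{-n-1}$. A nonlocal vertex algebra is a complex vector space $V$ with vector $\mathbf{1}$ and linear $Y:V\to\mathrm{Hom}(V,V((x)))$, $Y(v,x)=\sum_nv_nx^{-n-1}$, with $Y(\mathbf{1},x)v=v$, $Y(v,x)\mathbf{1}\in V[[x]]$ with constant term $v$, and for $u,v,w$ some $l\ge0$ with $(x_0+x_2)^lY(u,x_0+x_2)Y(v,x_2)w=(x_0+x_2)^lY(Y(u,x_0)v,x_2)w$; a homomorphism is a linear map preserving $\mathbf{1}$ and $Y$. $\mathcal{A}_{\mathbf{Q}}$ is the unital algebra with generators $X_{i,n},Y_{i,n}$ and relations $X_{i,m}X_{j,n}=q_{ij}X_{j,n}X_{i,m}$, $Y_{i,m}Y_{j,n}=q_{ij}Y_{j,n}Y_{i,m}$, $X_{i,m}Y_{j,n}-q_{ji}Y_{j,n}X_{i,m}=\delta_{ij}\delta_{m+n+1,0}$; $V_{\mathbf{Q}}=\mathcal{A}_{\mathbf{Q}}/(\mathcal{A}_{\mathbf{Q}}\mathcal{A}^+_{\mathbf{Q}})$ with $\mathcal{A}^+_{\mathbf{Q}}$ generated by $X_{i,m},Y_{i,m}$, $m\ge0$, $\mathbf{1}=1+\mathcal{A}_{\mathbf{Q}}\mathcal{A}^+_{\mathbf{Q}}$, $u^{(i)}=X_{i,-1}\mathbf{1}$, $v^{(i)}=Y_{i,-1}\mathbf{1}$; $V_{\mathbf{Q}}$ has the unique nonlocal vertex algebra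 structure with vacuum $\mathbf{1}$, $Y(u^{(i)},x)=\sum_nX_{i,n}x^{-n-1}$, $Y(v^{(i)},x)=\sum_nY_{i,n}x^{-n-1}$. *)

theory Defs
  imports Complex_Main "HOL-Library.Poly_Mapping"
begin

text \<open>The vertex operator is
  given by its modes: Y u n w stands for u_n w, i.e. Y(u,x)w = sum_n (Y u n w) x^(-n-1).

  To be able to speak about quotient spaces V/J (needed for V_Q), the axioms are
  stated modulo a subspace J; an honest nonlocal vertex algebra is the case J = {0}.\<close>

definition subspace_of :: "(complex \<Rightarrow> 'v::ab_group_add \<Rightarrow> 'v) \<Rightarrow> 'v set \<Rightarrow> bool" where
  "subspace_of s J \<longleftrightarrow> 0 \<in> J \<and> (\<forall>x\<in>J. \<forall>y\<in>J. x + y \<in> J) \<and> (\<forall>c. \<forall>x\<in>J. s c x \<in> J)"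

text \<open>Coefficient of x0^a x2^b in (x0+x2)^l Y(u,x0+x2)Y(v,x2)w: the j-th summand
  (the sum over j is finite by truncation); (x0+x2)^k with k = a+j is expanded in
  nonnegative powers of x2 with generalized binomial coefficients.\<close>
definition wa_lhs_term ::
  "(complex \<Rightarrow> 'v::ab_group_add \<Rightarrow> 'v) \<Rightarrow> ('v \<Rightarrow> int \<Rightarrow> 'v \<Rightarrow> 'v) \<Rightarrow> nat \<Rightarrow> 'v \<Rightarrow> 'v \<Rightarrow> 'v \<Rightarrow> int \<Rightarrow> int \<Rightarrow> nat \<Rightarrow> 'v" where
  "wa_lhs_term s Y l u v w a b j =
     s ((of_int (a + int j) :: complex) gchoose j)
       (Y u (int l - 1 - a - int j) (Y v (int j - b - 1) w))"

text \<open>Coefficient of x0^a x2^b in (x0+x2)^l Y(Y(u,x0)v,x2)w.\<close>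
definition wa_rhs ::
  "(complex \<Rightarrow> 'v::ab_group_add \<Rightarrow> 'v) \<Rightarrow> ('v \<Rightarrow> int \<Rightarrow> 'v \<Rightarrow> 'v) \<Rightarrow> nat \<Rightarrow> 'v \<Rightarrow> 'v \<Rightarrow> 'v \<Rightarrow> int \<Rightarrow> int \<Rightarrow> 'v" where
  "wa_rhs s Y l u v w a b =
     (\<Sum>i\<le>l. s (of_nat (l choose i)) (Y (Y u (int l - int i - 1 - a) v) (int i - b - 1) w))"

definition nlva_mod ::
  "(complex \<Rightarrow> 'v::ab_group_add \<Rightarrow> 'v) \<Rightarrow> 'v set \<Rightarrow> 'v \<Rightarrow> ('v \<Rightarrow> int \<Rightarrow> 'v \<Rightarrow> 'v) \<Rightarrow> bool" where
  "nlva_mod s J vac Y \<longleftrightarrow>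
     vector_space s \<and> subspace_of s J \<and>
     \<comment> \<open>Y is bilinear and well defined on V/J\<close>
     (\<forall>u u' n w. Y (u + u') n w - (Y u n w + Y u' n w) \<in> J) \<and>
     (\<forall>c u n w. Y (s c u) n w - s c (Y u n w) \<in> J) \<and>
     (\<forall>u n w w'. Y u n (w + w') - (Y u n w + Y u n w') \<in> J) \<and>
     (\<forall>c u n w. Y u n (s c w) - s c (Y u n w) \<in> J) \<and>
     (\<forall>u n w. u \<in> J \<longrightarrow> Y u n w \<in> J) \<and>
     (\<forall>u n w. w \<in> J \<longrightarrow> Y u n w \<in> J) \<and>
     \<comment> \<open>Y(u,x)w lies in V((x))\<close>
     (\<forall>u w. \<exists>N. \<forall>n\<ge>N. Y u n w \<in> J) \<and>
     \<comment> \<open>Y(1,x)v = v\<close>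
     (\<forall>v n. Y vac n v - (if n = -1 then v else 0) \<in> J) \<and>
     \<comment> \<open>Y(v,x)1 in V[[x]] with constant term v\<close>
     (\<forall>v n. n \<ge> 0 \<longrightarrow> Y v n vac \<in> J) \<and>
     (\<forall>v. Y v (-1) vac - v \<in> J) \<and>
     \<comment> \<open>weak associativity, coefficientwise in x0^a x2^b\<close>
     (\<forall>u v w. \<exists>l::nat. \<forall>a b.
        \<forall>\<^sub>F K in sequentially. (\<Sum>j<K. wa_lhs_term s Y l u v w a b j) - wa_rhs s Y l u v w a b \<in> J)"

definition nonlocal_va ::
  "(complex \<Rightarrow> 'v::ab_group_add \<Rightarrow> 'v) \<Rightarrow> 'v \<Rightarrow> ('v \<Rightarrow> int \<Rightarrow> 'v \<Rightarrow> 'v) \<Rightarrow> bool" where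
  "nonlocal_va s vac Y \<longleftrightarrow> nlva_mod s {0} vac Y"

text \<open>Homomorphism from the quotient (V1/J, vac1, Y1) to (V2, vac2, Y2), represented by a
  linear map on V1 vanishing on J.\<close>
definition nlva_hom_mod ::
  "(complex \<Rightarrow> 'v::ab_group_add \<Rightarrow> 'v) \<Rightarrow> 'v set \<Rightarrow> 'v \<Rightarrow> ('v \<Rightarrow> int \<Rightarrow> 'v \<Rightarrow> 'v) \<Rightarrow>
   (complex \<Rightarrow> 'w::ab_group_add \<Rightarrow> 'w) \<Rightarrow> 'w \<Rightarrow> ('w \<Rightarrow> int \<Rightarrow> 'w \<Rightarrow> 'w) \<Rightarrow> ('v \<Rightarrow> 'w) \<Rightarrow> bool" where
  "nlva_hom_mod s1 J vac1 Y1 s2 vac2 Y2 g \<longleftrightarrow>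
     (\<forall>x y. g (x + y) = g x + g y) \<and> (\<forall>c x. g (s1 c x) = s2 c (g x)) \<and>
     (\<forall>x\<in>J. g x = 0) \<and> g vac1 = vac2 \<and>
     (\<forall>u n w. g (Y1 u n w) = Y2 (g u) n (g w))"

text \<open>Generators X_{i,m} (GX i m) and Y_{i,m} (GY i m), indexed by a finite type 'l
  (standing for {1..l}).  The free algebra is spanned by words; the word [g1,...,gk]
  stands for the product g1 g2 ... gk.\<close>
datatype 'l gen = GX 'l int | GY 'l int

type_synonym 'l freealg = "'l gen list \<Rightarrow>\<^sub>0 complex"

definition cmul :: "complex \<Rightarrow> 'l freealg \<Rightarrow> 'l freealg" where
  "cmul c p = Poly_Mapping.map (\<lambda>x. c * x) p"

definition word :: "'l gen list \<Rightarrow> 'l freealg" where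
  "word w = Poly_Mapping.single w 1"

definition gmul :: "'l gen \<Rightarrow> 'l freealg \<Rightarrow> 'l freealg" where
  "gmul g p = (\<Sum>w\<in>Poly_Mapping.keys p. Poly_Mapping.single (g # w) (Poly_Mapping.lookup p w))"

text \<open>JQ Q: preimage in the free algebra of the left ideal A_Q A_Q^+ of A_Q, i.e. the
  two-sided ideal of the defining relations plus the left ideal generated by the
  X_{i,m}, Y_{i,m} with m >= 0.  V_Q = freealg / JQ Q.\<close>
inductive_set JQ :: "('l \<Rightarrow> 'l \<Rightarrow> complex) \<Rightarrow> 'l freealg set" for Q where
  zero: "0 \<in> JQ Q"
| add: "p \<in> JQ Q \<Longrightarrow> p' \<in> JQ Q \<Longrightarrow> p + p' \<in> JQ Q"
| smul: "p \<in> JQ Q \<Longrightarrow> cmul c p \<in> JQ Q"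
| relXX: "word (a @ [GX i m, GX j n] @ b) - cmul (Q i j) (word (a @ [GX j n, GX i m] @ b)) \<in> JQ Q"
| relYY: "word (a @ [GY i m, GY j n] @ b) - cmul (Q i j) (word (a @ [GY j n, GY i m] @ b)) \<in> JQ Q"
| relXY: "word (a @ [GX i m, GY j n] @ b) - cmul (Q j i) (word (a @ [GY j n, GX i m] @ b))
            - (if i = j \<and> m + n + 1 = 0 then word (a @ b) else 0) \<in> JQ Q"
| annX: "m \<ge> 0 \<Longrightarrow> word (a @ [GX i m]) \<in> JQ Q"
| annY: "m \<ge> 0 \<Longrightarrow> word (a @ [GY i m]) \<in> JQ Q"

definition vacQ :: "'l freealg" where "vacQ = word []"
definition uQ :: "'l \<Rightarrow> 'l freealg" where "uQ i = word [GX i (-1)]"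
definition vQ :: "'l \<Rightarrow> 'l freealg" where "vQ i = word [GY i (-1)]"

text \<open>YQ is (a representative of) the nonlocal vertex algebra structure on V_Q with vacuum
  vacQ and Y(u^(i),x) = sum X_{i,n} x^(-n-1), Y(v^(i),x) = sum Y_{i,n} x^(-n-1).\<close>
definition VQ_structure :: "('l \<Rightarrow> 'l \<Rightarrow> complex) \<Rightarrow> ('l freealg \<Rightarrow> int \<Rightarrow> 'l freealg \<Rightarrow> 'l freealg) \<Rightarrow> bool" where
  "VQ_structure Q YQ \<longleftrightarrow> nlva_mod cmul (JQ Q) vacQ YQ \<and>
     (\<forall>i n w. YQ (uQ i) n w - gmul (GX i n) w \<in> JQ Q) \<and>
     (\<forall>i n w. YQ (vQ i) n w - gmul (GY i n) w \<in> JQ Q)"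

end

theory Submission
  imports Defs
begin

text \<open>The homomorphism must send a word \<open>X_{i1,m1} \<dots> Y_{ik,mk} 1\<close> of \<open>V_Q\<close> to
  \<open>\<psi>(u^(i1))_{m1} \<dots> \<psi>(v^(ik))_{mk} 1\<close>, which gives uniqueness. Conversely this formula
  defines a linear map on the free algebra; the hypotheses on \<open>\<psi>\<close> say exactly that it kills
  the defining relations of \<open>\<A>_Q\<close>, and the creation property says it kills \<open>\<A>_Q \<A>_Q^+\<close>.
  It commutes with the vertex operators because the set of vectors on which a linear map
  intertwines the vertex operators contains the vacuum and the generators and is closed under
  all products \<open>a_p b\<close>: by weak associativity in source and target, the two coefficient arrays
  of \<open>Y(Y(a,x0)b,x2)w\<close> agree after multiplication by a power of \<open>x0 + x2\<close>, and both are
  truncated from below in \<open>x0\<close>, so they agree.\<close>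

lemma nlva_hom_modD:
  assumes "nlva_hom_mod s1 J vac1 Y1 s2 vac2 Y2 g"
  shows nlva_hom_mod_additive: "additive g"
    and nlva_hom_mod_scale: "g (s1 c x) = s2 c (g x)"
    and nlva_hom_mod_cong: "x - y \<in> J \<Longrightarrow> g x = g y"
    and nlva_hom_mod_vacuum: "g vac1 = vac2"
    and nlva_hom_mod_Y: "g (Y1 u n w) = Y2 (g u) n (g w)"
proof -
  show add: "additive g"
    using assms by unfold_locales (simp add: nlva_hom_mod_def)
  show "x - y \<in> J \<Longrightarrow> g x = g y"
    using assms additive.diff[OF add, of x y] by (simp add: nlva_hom_mod_def)
qed (use assms in \<open>simp_all add: nlva_hom_mod_def\<close>)

lemma lookup_map_mult:
  fixes c :: "'a::mult_zero"
  shows "Poly_Mapping.lookup (Poly_Mapping.map (\<lambda>x. c * x) p) k = c * Poly_Mapping.lookup p k"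
  by (simp add: map.rep_eq when_def)

lemma poly_mapping_sum_single:
  "p = (\<Sum>k\<in>Poly_Mapping.keys p. Poly_Mapping.single k (Poly_Mapping.lookup p k))"
  by (rule poly_mapping_eqI) (auto simp: lookup_sum lookup_single when_def in_keys_iff)

lemma single_eq_cmul_word: "Poly_Mapping.single w c = cmul c (word w)"
  by (simp add: cmul_def word_def)

lemma gmul_word: "gmul x (word w) = word (x # w)"
  by (simp add: gmul_def word_def)

definition linear_extension ::
    "('a \<Rightarrow> 'b \<Rightarrow> 'b) \<Rightarrow> ('k \<Rightarrow> 'b) \<Rightarrow> ('k \<Rightarrow>\<^sub>0 'a::zero) \<Rightarrow> 'b::comm_monoid_add" where
  "linear_extension scale f p = (\<Sum>k\<in>Poly_Mapping.keys p. scale (Poly_Mapping.lookup p k) (f k))"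

context module
begin

lemma linear_extension_superset:
  assumes "finite F" "Poly_Mapping.keys p \<subseteq> F"
  shows "linear_extension scale f p = (\<Sum>k\<in>F. Poly_Mapping.lookup p k *s f k)"
  unfolding linear_extension_def
  by (rule sum.mono_neutral_left) (use assms in \<open>auto simp: in_keys_iff\<close>)

lemma linear_extension_add:
  "linear_extension scale f (p + q) = linear_extension scale f p + linear_extension scale f q"
proof -
  let ?F = "Poly_Mapping.keys p \<union> Poly_Mapping.keys q"
  have "linear_extension scale f (p + q) = (\<Sum>k\<in>?F. Poly_Mapping.lookup (p + q) k *s f k)"
    by (rule linear_extension_superset) (auto simp: in_keys_iff lookup_add)
  also have "\<dots> = (\<Sum>k\<in>?F. Poly_Mapping.lookup p k *s f k) + (\<Sum>k\<in>?F. Poly_Mapping.lookup q k *s f k)"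
    by (simp add: lookup_add scale_left_distrib sum.distrib)
  also have "\<dots> = linear_extension scale f p + linear_extension scale f q"
    by (simp add: linear_extension_superset[of ?F p] linear_extension_superset[of ?F q])
  finally show ?thesis .
qed

lemma linear_extension_map_mult:
  "linear_extension scale f (Poly_Mapping.map (\<lambda>x. c * x) p) = c *s linear_extension scale f p"
proof -
  have "linear_extension scale f (Poly_Mapping.map (\<lambda>x. c * x) p)
      = (\<Sum>k\<in>Poly_Mapping.keys p. Poly_Mapping.lookup (Poly_Mapping.map (\<lambda>x. c * x) p) k *s f k)"
    by (rule linear_extension_superset) (auto simp: in_keys_iff lookup_map_mult)
  then show ?thesis
    by (simp add: lookup_map_mult linear_extension_def scale_sum_right)
qed

lemma linear_extension_single: "linear_extension scale f (Poly_Mapping.single k c) = c *s f k"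
  by (subst linear_extension_superset[of "{k}"]) auto

lemma linear_extension_unique:
  assumes "additive h"
    and h_scale: "\<And>c p. h (Poly_Mapping.map (\<lambda>x. c * x) p) = c *s h p"
    and h_basis: "\<And>k. h (Poly_Mapping.single k 1) = f k"
  shows "h p = linear_extension scale f p"
proof -
  have h_single: "h (Poly_Mapping.single k c) = c *s f k" for k c
  proof -
    have "Poly_Mapping.single k c = Poly_Mapping.map (\<lambda>x. c * x) (Poly_Mapping.single k 1)"
      by (rule poly_mapping_eqI) (simp add: lookup_map_mult lookup_single when_def)
    then show ?thesis
      using h_scale[of c "Poly_Mapping.single k 1"] h_basis[of k] by simp
  qed
  have "h p = h (\<Sum>k\<in>Poly_Mapping.keys p. Poly_Mapping.single k (Poly_Mapping.lookup p k))"
    by (simp flip: poly_mapping_sum_single)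
  also have "\<dots> = linear_extension scale f p"
    by (simp add: additive.sum[OF assms(1)] h_single linear_extension_def)
  finally show ?thesis .
qed

end

section \<open>Multiplication by \<open>x\<^sub>0 + x\<^sub>2\<close> on coefficient arrays\<close>

text \<open>An array \<open>F\<close> stands for the series \<open>\<Sum> F a b x\<^sub>0\<^sup>a x\<^sub>2\<^sup>b\<close>.\<close>
definition mult_x0_plus_x2 :: "(int \<Rightarrow> int \<Rightarrow> 'a::ab_group_add) \<Rightarrow> int \<Rightarrow> int \<Rightarrow> 'a" where
  "mult_x0_plus_x2 F a b = F (a - 1) b + F a (b - 1)"

lemma funpow_mult_x0_plus_x2_diff:
  "(mult_x0_plus_x2 ^^ k) (\<lambda>a b. F a b - G a b)
     = (\<lambda>a b. (mult_x0_plus_x2 ^^ k) F a b - (mult_x0_plus_x2 ^^ k) G a b)"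
  by (induction k) (auto simp: mult_x0_plus_x2_def fun_eq_iff algebra_simps)

lemma mult_x0_plus_x2_eq_0:
  assumes bounded: "\<And>a b. a < a0 \<Longrightarrow> F a b = 0"
    and zero: "mult_x0_plus_x2 F = (\<lambda>a b. 0)"
  shows "F = (\<lambda>a b. 0)"
proof -
  have step: "F a b = - F (a - 1) (b + 1)" for a b
    using fun_cong[OF fun_cong[OF zero, of a], of "b + 1"]
    by (simp add: mult_x0_plus_x2_def eq_neg_iff_add_eq_0 add.commute)
  have "\<forall>b. F (a0 + int n) b = 0" for n
  proof (induction n)
    case 0
    show ?case using step[of a0] bounded[of "a0 - 1"] by simp
  next
    case (Suc n)
    show ?case using step[of "a0 + int (Suc n)"] Suc.IH by simp
  qed
  then have above: "F a b = 0" if "a \<ge> a0" for a b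
    using that by (auto simp: zle_iff_zadd)
  show ?thesis
  proof (intro ext)
    show "F a b = 0" for a b
      by (cases "a < a0") (simp_all add: bounded above)
  qed
qed

lemma funpow_mult_x0_plus_x2_eq_0:
  assumes "\<And>a b. a < a0 \<Longrightarrow> F a b = 0"
    and "(mult_x0_plus_x2 ^^ k) F = (\<lambda>a b. 0)"
  shows "F = (\<lambda>a b. 0)"
  using assms
proof (induction k arbitrary: F)
  case (Suc k)
  have "mult_x0_plus_x2 F = (\<lambda>a b. 0)"
  proof (rule Suc.IH)
    show "a < a0 \<Longrightarrow> mult_x0_plus_x2 F a b = 0" for a b
      by (simp add: mult_x0_plus_x2_def Suc.prems)
    show "(mult_x0_plus_x2 ^^ k) (mult_x0_plus_x2 F) = (\<lambda>a b. 0)"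
      using Suc.prems(2) by (simp only: funpow_Suc_right comp_def)
  qed
  then show ?case
    by (intro mult_x0_plus_x2_eq_0[of a0 F]) (simp_all add: Suc.prems(1))
qed simp

lemma funpow_mult_x0_plus_x2_inj:
  assumes "\<And>a b. a < a0 \<Longrightarrow> F a b = G a b"
    and "(mult_x0_plus_x2 ^^ k) F = (mult_x0_plus_x2 ^^ k) G"
  shows "F = G"
proof -
  have "(mult_x0_plus_x2 ^^ k) (\<lambda>a b. F a b - G a b) = (\<lambda>a b. 0)"
    unfolding funpow_mult_x0_plus_x2_diff assms(2) by simp
  then have "(\<lambda>a b. F a b - G a b) = (\<lambda>a b. 0)"
    by (rule funpow_mult_x0_plus_x2_eq_0[of a0, rotated]) (simp add: assms(1))
  then show ?thesis
    by (simp add: fun_eq_iff)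
qed

context module
begin

lemma funpow_mult_x0_plus_x2_binomial:
  "(mult_x0_plus_x2 ^^ l) S a b = (\<Sum>i\<le>l. of_nat (l choose i) *s S (a - int l + int i) (b - int i))"
proof (induction l arbitrary: a b)
  case 0
  then show ?case by simp
next
  case (Suc l)
  let ?T = "\<lambda>c. \<Sum>i\<le>l. of_nat (c i) *s S (a - int l + int i) (b - 1 - int i)"
  have left: "(mult_x0_plus_x2 ^^ l) S (a - 1) b = S (a - int l - 1) b + ?T (\<lambda>i. l choose Suc i)"
  proof -
    have "(mult_x0_plus_x2 ^^ l) S (a - 1) b
        = (\<Sum>i\<le>Suc l. of_nat (l choose i) *s S (a - 1 - int l + int i) (b - int i))"
      by (simp add: Suc.IH binomial_eq_0)
    also have "\<dots> = S (a - int l - 1) b + ?T (\<lambda>i. l choose Suc i)"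
      unfolding sum.atMost_Suc_shift by (simp add: algebra_simps binomial_eq_0)
    finally show ?thesis .
  qed
  have right: "(mult_x0_plus_x2 ^^ l) S a (b - 1) = ?T (\<lambda>i. l choose i)"
    by (simp add: Suc.IH algebra_simps)
  have "(\<Sum>i\<le>Suc l. of_nat (Suc l choose i) *s S (a - int (Suc l) + int i) (b - int i))
      = S (a - int l - 1) b + ?T (\<lambda>i. l choose i) + ?T (\<lambda>i. l choose Suc i)"
    unfolding sum.atMost_Suc_shift
    by (simp add: scale_left_distrib sum.distrib algebra_simps)
  moreover have "(mult_x0_plus_x2 ^^ Suc l) S a b
      = (mult_x0_plus_x2 ^^ l) S (a - 1) b + (mult_x0_plus_x2 ^^ l) S a (b - 1)"
    by (simp only: funpow.simps comp_apply) (rule mult_x0_plus_x2_def)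
  ultimately show ?case
    by (simp add: left right algebra_simps)
qed

end

section \<open>Weak associativity as an identity of coefficient arrays\<close>

text \<open>The coefficient of \<open>x\<^sub>0\<^sup>a x\<^sub>2\<^sup>b\<close> in \<open>Y(Y(u,x\<^sub>0)v,x\<^sub>2)w\<close>.\<close>
definition iterate_coeff :: "('v \<Rightarrow> int \<Rightarrow> 'v \<Rightarrow> 'v) \<Rightarrow> 'v \<Rightarrow> 'v \<Rightarrow> 'v \<Rightarrow> int \<Rightarrow> int \<Rightarrow> 'v" where
  "iterate_coeff Y u v w a b = Y (Y u (- a - 1) v) (- b - 1) w"

lemma wa_rhs_eq_sum_iterate_coeff:
  "wa_rhs s Y l u v w a b
     = (\<Sum>i\<le>l. s (of_nat (l choose i)) (iterate_coeff Y u v w (a - int l + int i) (b - int i)))"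
proof -
  have "int l - int i - 1 - a = - (a - int l + int i) - 1" "int i - b - 1 = - (b - int i) - 1" for i
    by simp_all
  then show ?thesis
    unfolding wa_rhs_def iterate_coeff_def by presburger
qed

locale nonlocal_vertex_algebra =
  fixes s :: "complex \<Rightarrow> 'v::ab_group_add \<Rightarrow> 'v" and vac :: 'v and Y :: "'v \<Rightarrow> int \<Rightarrow> 'v \<Rightarrow> 'v"
  assumes nonlocal_va: "nonlocal_va s vac Y"
begin

sublocale module s
  using nonlocal_va by (simp add: nonlocal_va_def nlva_mod_def module_iff_vector_space)

lemma Y_add_left: "Y (u + u') n w = Y u n w + Y u' n w"
  and Y_scale_left: "Y (s c u) n w = s c (Y u n w)"
  and Y_add_right: "Y u n (w + w') = Y u n w + Y u n w'"
  and Y_scale_right: "Y u n (s c w) = s c (Y u n w)"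
  and Y_truncated: "\<exists>N. \<forall>n\<ge>N. Y u n w = 0"
  and Y_vacuum: "Y vac n w = (if n = -1 then w else 0)"
  and Y_creation: "n \<ge> 0 \<Longrightarrow> Y u n vac = 0"
  and Y_creation_const: "Y u (-1) vac = u"
  and weak_assoc: "\<exists>l::nat. \<forall>a b. \<forall>\<^sub>F K in sequentially.
     (\<Sum>j<K. wa_lhs_term s Y l u v w a b j) = wa_rhs s Y l u v w a b"
  using nonlocal_va unfolding nonlocal_va_def nlva_mod_def by auto

lemma Y_zero_left [simp]: "Y 0 n w = 0"
  using Y_add_left[of 0 0 n w] by simp

lemma Y_zero_right [simp]: "Y u n 0 = 0"
  using Y_add_right[of u n 0 0] by simp

lemma wa_rhs_eq_funpow_mult_x0_plus_x2:
  "wa_rhs s Y l u v w = (mult_x0_plus_x2 ^^ l) (iterate_coeff Y u v w)"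
  by (simp add: fun_eq_iff wa_rhs_eq_sum_iterate_coeff funpow_mult_x0_plus_x2_binomial)

lemma wa_lhs_term_Suc_Suc:
  "wa_lhs_term s Y (Suc l) u v w a b (Suc j)
     = wa_lhs_term s Y l u v w (a - 1) b (Suc j) + wa_lhs_term s Y l u v w a (b - 1) j"
proof -
  have pascal: "(of_int (a + int (Suc j)) :: complex) gchoose Suc j
        = (of_int (a - 1 + int (Suc j)) gchoose Suc j) + (of_int (a + int j) gchoose j)"
    using gbinomial_Suc_Suc[of "of_int (a + int j) :: complex" j]
    by (simp add: add.commute add.left_commute)
  have "int (Suc l) - 1 - a - int (Suc j) = int l - 1 - (a - 1) - int (Suc j)"
    "int (Suc l) - 1 - a - int (Suc j) = int l - 1 - a - int j"
    "int (Suc j) - b - 1 = int j - (b - 1) - 1"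
    by simp_all
  then show ?thesis
    unfolding wa_lhs_term_def pascal scale_left_distrib by metis
qed

lemma wa_lhs_term_Suc_0:
  "wa_lhs_term s Y (Suc l) u v w a b 0 = wa_lhs_term s Y l u v w (a - 1) b 0"
  by (simp add: wa_lhs_term_def)

definition mode_bound :: "'v \<Rightarrow> 'v \<Rightarrow> int" where
  "mode_bound v w = (SOME N. \<forall>n\<ge>N. Y v n w = 0)"

lemma Y_mode_bound: "n \<ge> mode_bound v w \<Longrightarrow> Y v n w = 0"
  unfolding mode_bound_def using someI_ex[OF Y_truncated[of v w]] by blast

text \<open>The coefficient of \<open>x\<^sub>0\<^sup>a x\<^sub>2\<^sup>b\<close> in \<open>(x\<^sub>0 + x\<^sub>2)\<^sup>l Y(u,x\<^sub>0 + x\<^sub>2)Y(v,x\<^sub>2)w\<close>: only the terms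
  \<open>j < mode_bound v w + b + 1\<close> can be nonzero.\<close>
definition wa_lhs :: "nat \<Rightarrow> 'v \<Rightarrow> 'v \<Rightarrow> 'v \<Rightarrow> int \<Rightarrow> int \<Rightarrow> 'v" where
  "wa_lhs l u v w a b = (\<Sum>j<nat (mode_bound v w + b + 1). wa_lhs_term s Y l u v w a b j)"

lemma sum_wa_lhs_term_eq_wa_lhs:
  assumes "K \<ge> nat (mode_bound v w + b + 1)"
  shows "(\<Sum>j<K. wa_lhs_term s Y l u v w a b j) = wa_lhs l u v w a b"
  unfolding wa_lhs_def
  by (rule sum.mono_neutral_right) (use assms in \<open>auto simp: wa_lhs_term_def Y_mode_bound\<close>)

lemma eventually_sum_wa_lhs_term:
  "\<forall>\<^sub>F K in sequentially. (\<Sum>j<K. wa_lhs_term s Y l u v w a b j) = wa_lhs l u v w a b"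
  unfolding eventually_sequentially using sum_wa_lhs_term_eq_wa_lhs by blast

lemma wa_lhs_Suc: "wa_lhs (Suc l) u v w = mult_x0_plus_x2 (wa_lhs l u v w)"
proof (intro ext)
  fix a b
  define K where "K = nat (mode_bound v w + b + 1) + nat (mode_bound v w + (b - 1) + 1)"
  have "wa_lhs (Suc l) u v w a b = (\<Sum>j<Suc K. wa_lhs_term s Y (Suc l) u v w a b j)"
    by (rule sum_wa_lhs_term_eq_wa_lhs[symmetric]) (simp add: K_def)
  also have "\<dots> = (\<Sum>j<Suc K. wa_lhs_term s Y l u v w (a - 1) b j) + (\<Sum>j<K. wa_lhs_term s Y l u v w a (b - 1) j)"
    unfolding sum.lessThan_Suc_shift[of _ K] wa_lhs_term_Suc_Suc wa_lhs_term_Suc_0 sum.distrib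
    by (simp add: add.assoc)
  also have "\<dots> = mult_x0_plus_x2 (wa_lhs l u v w) a b"
  proof -
    have "Suc K \<ge> nat (mode_bound v w + b + 1)" "K \<ge> nat (mode_bound v w + (b - 1) + 1)"
      by (simp_all add: K_def)
    then show ?thesis
      by (simp add: sum_wa_lhs_term_eq_wa_lhs mult_x0_plus_x2_def del: sum.lessThan_Suc)
  qed
  finally show "wa_lhs (Suc l) u v w a b = mult_x0_plus_x2 (wa_lhs l u v w) a b" .
qed

lemma wa_lhs_add: "wa_lhs (l + k) u v w = (mult_x0_plus_x2 ^^ k) (wa_lhs l u v w)"
  by (induction k) (simp_all add: wa_lhs_Suc)

lemma weak_assoc_coeffs:
  "\<exists>l. wa_lhs l u v w = (mult_x0_plus_x2 ^^ l) (iterate_coeff Y u v w)"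
proof -
  obtain l where l: "\<And>a b. \<forall>\<^sub>F K in sequentially.
      (\<Sum>j<K. wa_lhs_term s Y l u v w a b j) = wa_rhs s Y l u v w a b"
    using weak_assoc by blast
  have "wa_lhs l u v w a b = wa_rhs s Y l u v w a b" for a b
    using eventually_happens'[OF sequentially_bot
        eventually_conj[OF l[of a b] eventually_sum_wa_lhs_term[of l u v w a b]]]
    by auto
  then show ?thesis
    by (auto simp: fun_eq_iff wa_rhs_eq_funpow_mult_x0_plus_x2)
qed

end

section \<open>Linear maps intertwining vertex operators\<close>

locale nlva_linear_map = nonlocal_vertex_algebra s vac Y
  for s :: "complex \<Rightarrow> 'v::ab_group_add \<Rightarrow> 'v" and vac Y +
  fixes s1 :: "complex \<Rightarrow> 'w::ab_group_add \<Rightarrow> 'w" and J :: "'w set" and vac1 :: 'w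
    and Y1 :: "'w \<Rightarrow> int \<Rightarrow> 'w \<Rightarrow> 'w" and g :: "'w \<Rightarrow> 'v"
  assumes source: "nlva_mod s1 J vac1 Y1"
    and g_add: "g (x + y) = g x + g y"
    and g_scale: "g (s1 c x) = s c (g x)"
    and g_vanishes: "x \<in> J \<Longrightarrow> g x = 0"
    and g_vacuum: "g vac1 = vac"
begin

sublocale g: additive g
  by unfold_locales (rule g_add)

lemma g_cong: "x - y \<in> J \<Longrightarrow> g x = g y"
  using g_vanishes g.diff by force

lemma g_Y1_add_left: "g (Y1 (u + u') n w) = g (Y1 u n w) + g (Y1 u' n w)"
proof -
  have "Y1 (u + u') n w - (Y1 u n w + Y1 u' n w) \<in> J"
    using source by (simp add: nlva_mod_def)
  then show ?thesis by (simp add: g_cong g_add)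
qed

lemma g_Y1_scale_left: "g (Y1 (s1 c u) n w) = s c (g (Y1 u n w))"
proof -
  have "Y1 (s1 c u) n w - s1 c (Y1 u n w) \<in> J"
    using source by (simp add: nlva_mod_def)
  then show ?thesis by (simp add: g_cong g_scale)
qed

lemma g_Y1_vacuum: "g (Y1 vac1 n w) = (if n = -1 then g w else 0)"
proof -
  have "Y1 vac1 n w - (if n = -1 then w else 0) \<in> J"
    using source by (simp add: nlva_mod_def)
  then show ?thesis by (simp add: g_cong g.zero)
qed

lemma g_Y1_vanishes: "u \<in> J \<Longrightarrow> g (Y1 u n w) = 0"
  using source unfolding nlva_mod_def by (auto intro: g_vanishes)

definition intertwines :: "'w \<Rightarrow> bool" where
  "intertwines u \<longleftrightarrow> (\<forall>n w. g (Y1 u n w) = Y (g u) n (g w))"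

lemma intertwines_add: "intertwines u \<Longrightarrow> intertwines u' \<Longrightarrow> intertwines (u + u')"
  by (simp add: intertwines_def g_Y1_add_left g_add Y_add_left)

lemma intertwines_scale: "intertwines u \<Longrightarrow> intertwines (s1 c u)"
  by (simp add: intertwines_def g_Y1_scale_left g_scale Y_scale_left)

lemma intertwines_sum: "finite F \<Longrightarrow> (\<And>x. x \<in> F \<Longrightarrow> intertwines (f x)) \<Longrightarrow> intertwines (sum f F)"
proof (induction F rule: finite_induct)
  case empty
  have "0 \<in> J"
    using source by (simp add: nlva_mod_def subspace_of_def)
  then show ?case
    by (simp add: intertwines_def g_Y1_vanishes g.zero)
qed (simp add: intertwines_add)

lemma intertwines_cong:
  assumes "intertwines u" and "u - u' \<in> J"
  shows "intertwines u'"
proof -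
  have "module s1"
    using source by (simp add: nlva_mod_def module_iff_vector_space)
  then have "u' = u + s1 (-1) (u - u')"
    by (simp add: module.scale_minus_left module.scale_one)
  moreover have "s1 (-1) (u - u') \<in> J"
    using assms(2) source by (simp add: nlva_mod_def subspace_of_def)
  moreover have "intertwines (u + e)" if "e \<in> J" for e
    using assms(1) that by (simp add: intertwines_def g_Y1_add_left g_Y1_vanishes g_add g_vanishes)
  ultimately show ?thesis
    by metis
qed

lemma intertwines_vacuum: "intertwines vac1"
  by (simp add: intertwines_def g_Y1_vacuum g_vacuum Y_vacuum)

lemma weak_assoc_image:
  assumes "intertwines a" and "intertwines b"
  shows "\<exists>l. wa_lhs l (g a) (g b) (g w) = (mult_x0_plus_x2 ^^ l) (\<lambda>\<alpha> \<beta>. g (iterate_coeff Y1 a b w \<alpha> \<beta>))"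
proof -
  obtain l where l: "\<And>\<alpha> \<beta>. \<forall>\<^sub>F K in sequentially.
      (\<Sum>j<K. wa_lhs_term s1 Y1 l a b w \<alpha> \<beta> j) - wa_rhs s1 Y1 l a b w \<alpha> \<beta> \<in> J"
    using source unfolding nlva_mod_def by meson
  have g_term: "g (wa_lhs_term s1 Y1 l a b w \<alpha> \<beta> j) = wa_lhs_term s Y l (g a) (g b) (g w) \<alpha> \<beta> j"
    for \<alpha> \<beta> j
    using assms by (simp add: wa_lhs_term_def g_scale intertwines_def)
  have "wa_lhs l (g a) (g b) (g w) \<alpha> \<beta> = g (wa_rhs s1 Y1 l a b w \<alpha> \<beta>)" for \<alpha> \<beta>
  proof -
    obtain K where
      "(\<Sum>j<K. wa_lhs_term s1 Y1 l a b w \<alpha> \<beta> j) - wa_rhs s1 Y1 l a b w \<alpha> \<beta> \<in> J"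
      "(\<Sum>j<K. wa_lhs_term s Y l (g a) (g b) (g w) \<alpha> \<beta> j) = wa_lhs l (g a) (g b) (g w) \<alpha> \<beta>"
      using eventually_happens'[OF sequentially_bot
          eventually_conj[OF l[of \<alpha> \<beta>] eventually_sum_wa_lhs_term[of l "g a" "g b" "g w" \<alpha> \<beta>]]]
      by blast
    then have "g (wa_rhs s1 Y1 l a b w \<alpha> \<beta>) = g (\<Sum>j<K. wa_lhs_term s1 Y1 l a b w \<alpha> \<beta> j)"
      and "(\<Sum>j<K. wa_lhs_term s Y l (g a) (g b) (g w) \<alpha> \<beta> j) = wa_lhs l (g a) (g b) (g w) \<alpha> \<beta>"
      by (simp_all add: g_cong)
    then show ?thesis
      by (simp add: g.sum g_term)
  qed
  then show ?thesis
    by (auto simp: fun_eq_iff wa_rhs_eq_sum_iterate_coeff g.sum g_scale funpow_mult_x0_plus_x2_binomial)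
qed

lemma intertwines_Y1:
  assumes a: "intertwines a" and b: "intertwines b"
  shows "intertwines (Y1 a p b)"
  unfolding intertwines_def
proof (intro allI)
  fix q w
  let ?S = "\<lambda>\<alpha> \<beta>. g (iterate_coeff Y1 a b w \<alpha> \<beta>)"
    and ?T = "iterate_coeff Y (g a) (g b) (g w)"
  obtain l1 where l1: "wa_lhs l1 (g a) (g b) (g w) = (mult_x0_plus_x2 ^^ l1) ?S"
    using weak_assoc_image[OF a b] by blast
  obtain l2 where l2: "wa_lhs l2 (g a) (g b) (g w) = (mult_x0_plus_x2 ^^ l2) ?T"
    using weak_assoc_coeffs by blast
  have "(mult_x0_plus_x2 ^^ (l2 + l1)) ?S = (mult_x0_plus_x2 ^^ l2) (wa_lhs l1 (g a) (g b) (g w))"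
    by (simp only: l1 funpow_add comp_apply)
  also have "\<dots> = wa_lhs (l2 + l1) (g a) (g b) (g w)"
    by (simp only: wa_lhs_add add.commute)
  also have "\<dots> = (mult_x0_plus_x2 ^^ l1) (wa_lhs l2 (g a) (g b) (g w))"
    by (rule wa_lhs_add)
  also have "\<dots> = (mult_x0_plus_x2 ^^ (l2 + l1)) ?T"
    by (simp only: l2 funpow_add comp_apply add.commute)
  finally have same_multiple: "(mult_x0_plus_x2 ^^ (l2 + l1)) ?S = (mult_x0_plus_x2 ^^ (l2 + l1)) ?T" .
  obtain N where N: "\<And>n. n \<ge> N \<Longrightarrow> Y1 a n b \<in> J"
    using source unfolding nlva_mod_def by meson
  have "?S \<alpha> \<beta> = ?T \<alpha> \<beta>" if "\<alpha> < - N" for \<alpha> \<beta>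
  proof -
    have "Y1 a (- \<alpha> - 1) b \<in> J" using that by (intro N) simp
    moreover have "g (Y1 a (- \<alpha> - 1) b) = Y (g a) (- \<alpha> - 1) (g b)"
      using a by (simp add: intertwines_def)
    ultimately show ?thesis
      by (simp add: iterate_coeff_def g_Y1_vanishes g_vanishes)
  qed
  then have "?S = ?T"
    using same_multiple by (rule funpow_mult_x0_plus_x2_inj)
  then have "?S (- p - 1) (- q - 1) = ?T (- p - 1) (- q - 1)" by metis
  then show "g (Y1 (Y1 a p b) q w) = Y (g (Y1 a p b)) q (g w)"
    using a by (simp add: iterate_coeff_def intertwines_def)
qed

end

section \<open>The representation of \<open>V\<^sub>Q\<close> determined by \<open>\<psi>\<close>\<close>

locale VQ_representation = nonlocal_vertex_algebra s vac Y
  for s :: "complex \<Rightarrow> 'v::ab_group_add \<Rightarrow> 'v" and vac Y +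
  fixes Q :: "'l \<Rightarrow> 'l \<Rightarrow> complex"
    and YQ :: "'l freealg \<Rightarrow> int \<Rightarrow> 'l freealg \<Rightarrow> 'l freealg"
    and psiu psiv :: "'l \<Rightarrow> 'v"
  assumes VQ: "VQ_structure Q YQ"
    and uu: "\<And>i j m n w. Y (psiu i) m (Y (psiu j) n w) = s (Q i j) (Y (psiu j) n (Y (psiu i) m w))"
    and vv: "\<And>i j m n w. Y (psiv i) m (Y (psiv j) n w) = s (Q i j) (Y (psiv j) n (Y (psiv i) m w))"
    and uv: "\<And>i j m n w. Y (psiu i) m (Y (psiv j) n w) - s (Q j i) (Y (psiv j) n (Y (psiu i) m w))
               = (if i = j \<and> m + n + 1 = 0 then w else 0)"
begin

fun gen_action :: "'l gen \<Rightarrow> 'v \<Rightarrow> 'v" where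
  "gen_action (GX i n) x = Y (psiu i) n x"
| "gen_action (GY i n) x = Y (psiv i) n x"

lemma gen_action_add: "gen_action z (x + y) = gen_action z x + gen_action z y"
  by (cases z) (simp_all add: Y_add_right)

lemma gen_action_scale: "gen_action z (s c x) = s c (gen_action z x)"
  by (cases z) (simp_all add: Y_scale_right)

sublocale gen_action: additive "gen_action z"
  by unfold_locales (rule gen_action_add)

lemma foldr_gen_action_add: "foldr gen_action zs (x + y) = foldr gen_action zs x + foldr gen_action zs y"
  by (induction zs) (simp_all add: gen_action_add)

sublocale foldr_gen_action: additive "foldr gen_action zs"
  by unfold_locales (rule foldr_gen_action_add)

lemma foldr_gen_action_scale: "foldr gen_action zs (s c x) = s c (foldr gen_action zs x)"
  by (induction zs) (simp_all add: gen_action_scale)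

definition word_action :: "'l gen list \<Rightarrow> 'v" where
  "word_action zs = foldr gen_action zs vac"

lemma word_action_Nil [simp]: "word_action [] = vac"
  by (simp add: word_action_def)

lemma word_action_Cons [simp]: "word_action (z # zs) = gen_action z (word_action zs)"
  by (simp add: word_action_def)

lemma word_action_append: "word_action (zs @ zs') = foldr gen_action zs (word_action zs')"
  by (simp add: word_action_def)

definition psi_extension :: "'l freealg \<Rightarrow> 'v" where
  "psi_extension = linear_extension s word_action"

lemma psi_extension_add: "psi_extension (p + p') = psi_extension p + psi_extension p'"
  by (simp add: psi_extension_def linear_extension_add)

lemma psi_extension_cmul: "psi_extension (cmul c p) = s c (psi_extension p)"
  by (simp add: psi_extension_def cmul_def linear_extension_map_mult)

lemma psi_extension_word: "psi_extension (word w) = word_action w"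
  by (simp add: psi_extension_def word_def linear_extension_single)

sublocale psi_extension: additive psi_extension
  by unfold_locales (rule psi_extension_add)

lemma psi_extension_gmul: "psi_extension (gmul z p) = gen_action z (psi_extension p)"
proof -
  have "psi_extension (gmul z p)
      = (\<Sum>w\<in>Poly_Mapping.keys p. s (Poly_Mapping.lookup p w) (gen_action z (word_action w)))"
    by (simp add: gmul_def psi_extension.sum single_eq_cmul_word psi_extension_cmul psi_extension_word)
  also have "\<dots> = gen_action z (psi_extension p)"
    by (simp add: psi_extension_def linear_extension_def gen_action.sum gen_action_scale)
  finally show ?thesis .
qed

lemma psi_extension_JQ: "x \<in> JQ Q \<Longrightarrow> psi_extension x = 0"
proof (induction rule: JQ.induct)
  case (relXX a i m j n b)
  then show ?case
    by (simp add: psi_extension.diff psi_extension_cmul psi_extension_word word_action_append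
        uu[of i m j n] foldr_gen_action_scale)
next
  case (relYY a i m j n b)
  then show ?case
    by (simp add: psi_extension.diff psi_extension_cmul psi_extension_word word_action_append
        vv[of i m j n] foldr_gen_action_scale)
next
  case (relXY a i m j n b)
  have "psi_extension (word (a @ [GX i m, GY j n] @ b))
        - psi_extension (cmul (Q j i) (word (a @ [GY j n, GX i m] @ b)))
      = foldr gen_action a (Y (psiu i) m (Y (psiv j) n (word_action b))
          - s (Q j i) (Y (psiv j) n (Y (psiu i) m (word_action b))))"
    by (simp add: psi_extension_cmul psi_extension_word word_action_append foldr_gen_action.diff
        foldr_gen_action_scale)
  then show ?case
    by (simp add: uv psi_extension.diff psi_extension_word word_action_append foldr_gen_action.zero
        psi_extension.zero)
qed (simp_all add: psi_extension_add psi_extension_cmul psi_extension_word word_action_append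
      Y_creation foldr_gen_action.zero psi_extension.zero)

lemma YQ_uQ_mod: "YQ (uQ i) n p - gmul (GX i n) p \<in> JQ Q"
  and YQ_vQ_mod: "YQ (vQ i) n p - gmul (GY i n) p \<in> JQ Q"
  using VQ by (simp_all add: VQ_structure_def)

sublocale psi_extension_map: nlva_linear_map s vac Y cmul "JQ Q" vacQ YQ psi_extension
proof unfold_locales
  show "nlva_mod cmul (JQ Q) vacQ YQ"
    using VQ by (simp add: VQ_structure_def)
qed (simp_all add: psi_extension_add psi_extension_cmul psi_extension_JQ vacQ_def psi_extension_word)

lemma psi_extension_uQ: "psi_extension (uQ i) = psiu i"
  and psi_extension_vQ: "psi_extension (vQ i) = psiv i"
  by (simp_all add: uQ_def vQ_def psi_extension_word Y_creation_const)

lemma intertwines_generator: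
  "psi_extension_map.intertwines (uQ i)" "psi_extension_map.intertwines (vQ i)"
  unfolding psi_extension_map.intertwines_def
  using psi_extension_map.g_cong[OF YQ_uQ_mod] psi_extension_map.g_cong[OF YQ_vQ_mod]
  by (simp_all add: psi_extension_gmul psi_extension_uQ psi_extension_vQ)

lemma intertwines_word: "psi_extension_map.intertwines (word w)"
proof (induction w)
  case Nil
  show ?case
    using psi_extension_map.intertwines_vacuum by (simp add: vacQ_def)
next
  case (Cons z w)
  show ?case
  proof (cases z)
    case (GX i n)
    show ?thesis
      by (rule psi_extension_map.intertwines_cong[OF
            psi_extension_map.intertwines_Y1[OF intertwines_generator(1) Cons.IH]])
        (use YQ_uQ_mod[of i n "word w"] in \<open>simp add: gmul_word GX\<close>)
  next
    case (GY i n)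
    show ?thesis
      by (rule psi_extension_map.intertwines_cong[OF
            psi_extension_map.intertwines_Y1[OF intertwines_generator(2) Cons.IH]])
        (use YQ_vQ_mod[of i n "word w"] in \<open>simp add: gmul_word GY\<close>)
  qed
qed

lemma intertwines_all: "psi_extension_map.intertwines p"
  by (subst poly_mapping_sum_single)
    (auto intro!: psi_extension_map.intertwines_sum psi_extension_map.intertwines_scale
      simp: single_eq_cmul_word intertwines_word)

lemma psi_extension_hom: "nlva_hom_mod cmul (JQ Q) vacQ YQ s vac Y psi_extension"
  using intertwines_all
  unfolding nlva_hom_mod_def psi_extension_map.intertwines_def
  by (simp add: psi_extension_add psi_extension_cmul psi_extension_JQ vacQ_def psi_extension_word)

lemma hom_word:
  assumes hom: "nlva_hom_mod cmul (JQ Q) vacQ YQ s vac Y h"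
    and h_uQ: "\<And>i. h (uQ i) = psiu i" and h_vQ: "\<And>i. h (vQ i) = psiv i"
  shows "h (word w) = word_action w"
proof (induction w)
  case Nil
  show ?case
    using nlva_hom_mod_vacuum[OF hom] by (simp add: vacQ_def)
next
  case (Cons z w)
  show ?case
  proof (cases z)
    case (GX i n)
    then have "h (word (z # w)) = h (YQ (uQ i) n (word w))"
      using nlva_hom_mod_cong[OF hom YQ_uQ_mod[of i n "word w"]] by (simp add: gmul_word)
    then show ?thesis
      using Cons.IH GX by (simp add: nlva_hom_mod_Y[OF hom] h_uQ)
  next
    case (GY i n)
    then have "h (word (z # w)) = h (YQ (vQ i) n (word w))"
      using nlva_hom_mod_cong[OF hom YQ_vQ_mod[of i n "word w"]] by (simp add: gmul_word)
    then show ?thesis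
      using Cons.IH GY by (simp add: nlva_hom_mod_Y[OF hom] h_vQ)
  qed
qed

lemma hom_eq_psi_extension:
  assumes hom: "nlva_hom_mod cmul (JQ Q) vacQ YQ s vac Y h"
    and "\<And>i. h (uQ i) = psiu i" and "\<And>i. h (vQ i) = psiv i"
  shows "h = psi_extension"
proof
  fix p
  show "h p = psi_extension p"
    unfolding psi_extension_def
  proof (rule linear_extension_unique)
    show "additive h"
      by (rule nlva_hom_mod_additive[OF hom])
    show "h (Poly_Mapping.map (\<lambda>x. c * x) x) = s c (h x)" for c x
      using nlva_hom_mod_scale[OF hom] by (simp add: cmul_def)
    show "h (Poly_Mapping.single w 1) = word_action w" for w
      using hom_word[OF assms] by (simp add: word_def)
  qed
qed

end

theorem proposition3p8:
  fixes Q :: "'l::finite \<Rightarrow> 'l \<Rightarrow> complex"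
    and YQ :: "'l freealg \<Rightarrow> int \<Rightarrow> 'l freealg \<Rightarrow> 'l freealg"
    and s :: "complex \<Rightarrow> 'v::ab_group_add \<Rightarrow> 'v"
    and vac :: 'v and Y :: "'v \<Rightarrow> int \<Rightarrow> 'v \<Rightarrow> 'v"
    and psiu psiv :: "'l \<Rightarrow> 'v"
  assumes Q: "\<And>i j. Q i j * Q j i = 1"
    and VQ: "VQ_structure Q YQ"
    and V: "nonlocal_va s vac Y"
    and uu: "\<And>i j m n w. Y (psiu i) m (Y (psiu j) n w) = s (Q i j) (Y (psiu j) n (Y (psiu i) m w))"
    and vv: "\<And>i j m n w. Y (psiv i) m (Y (psiv j) n w) = s (Q i j) (Y (psiv j) n (Y (psiv i) m w))"
    and uv: "\<And>i j m n w. Y (psiu i) m (Y (psiv j) n w) - s (Q j i) (Y (psiv j) n (Y (psiu i) m w))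
               = (if i = j \<and> m + n + 1 = 0 then w else 0)"
  shows "\<exists>!g. nlva_hom_mod cmul (JQ Q) vacQ YQ s vac Y g \<and>
              (\<forall>i. g (uQ i) = psiu i \<and> g (vQ i) = psiv i)"
proof -
  interpret VQ_representation s vac Y Q YQ psiu psiv
    by unfold_locales (fact V VQ uu vv uv)+
  show ?thesis
  proof (rule ex1I)
    show "nlva_hom_mod cmul (JQ Q) vacQ YQ s vac Y psi_extension \<and>
        (\<forall>i. psi_extension (uQ i) = psiu i \<and> psi_extension (vQ i) = psiv i)"
      by (simp add: psi_extension_hom psi_extension_uQ psi_extension_vQ)
  qed (intro hom_eq_psi_extension; simp)
qed

end
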